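(* $I_2(4,v)=o(v^2)$ as $v\to\infty$; that is, for every $\epsilon>0$ there exists $v_0$ such that $I_2(4,v)<\epsilon v^2$ for all $v>v_0$.
   Context: A $(w,v)$ set system is a pair $(\mathcal{X},\mathcal{B})$ with $|\mathcal{X}|=v$ and $\mathcal{B}\subseteq\binom{\mathcal{X}}{w}$ (the family of all $w$-element subsets of $\mathcal{X}$); elements of $\mathcal{B}$ are blocks. For a $w$-subset $T\subseteq\mathcal{X}$ let $P_t(T)=\{\mathcal{P}\subseteq\mathcal{B}: |\mathcal{P}|\le t,\ T\subseteq\bigcup_{B\in\mathcal{P}}B\}$. The set system is a $t$-IPPS$(w,v)$ if for every $w$-subset $T\subseteq\mathcal{X}$, either $P_t(T)=\emptyset$ or $\bigcap_{\mathcal{P}\in P_t(T)}\mathcal{P}\neq\emptyset$. $I_t(w,v)$ denotes the maximum of $|\mathcal{B}|$ over all $t$-IPPS$(w,v)$. *)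

theory Defs
  imports Complex_Main
begin

definition covering_families :: "nat \<Rightarrow> 'a set set \<Rightarrow> 'a set \<Rightarrow> 'a set set set" where
  "covering_families t \<B> T = {\<P>. \<P> \<subseteq> \<B> \<and> card \<P> \<le> t \<and> T \<subseteq> \<Union>\<P>}"

definition is_IPPS :: "nat \<Rightarrow> nat \<Rightarrow> 'a set \<Rightarrow> 'a set set \<Rightarrow> bool" where
  "is_IPPS t w X \<B> \<longleftrightarrow>
     \<B> \<subseteq> {B. B \<subseteq> X \<and> card B = w} \<and>
     (\<forall>T. T \<subseteq> X \<and> card T = w \<longrightarrow>
        covering_families t \<B> T = {} \<or> \<Inter>(covering_families t \<B> T) \<noteq> {})"

text \<open>I_t(w,v): ground set taken w.l.o.g. to be {0..<v}.\<close>
definition I_IPPS :: "nat \<Rightarrow> nat \<Rightarrow> nat \<Rightarrow> nat" where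
  "I_IPPS t w v = Max {card \<B> | \<B> :: nat set set. is_IPPS t w {..<v} \<B>}"

end

theory Submission
  imports Defs "HOL-Analysis.Convex"
begin

text \<open>
  Join two points when some block contains both. In a 2-IPPS(4,v) every block owns a pair of
  points lying in no other block (otherwise the block itself and two other blocks would be two
  disjoint covering families of it), so this graph has at least |B| ordered edges. If x y z w x
  is a 4-cycle of the graph with x \<noteq> z and y \<noteq> w, the blocks covering xy, zw and those
  covering yz, wx are two covering families of {x,y,z,w}; they share a block, which therefore
  contains three consecutive vertices of the cycle. Hence there are at most 2v^3 + 256 v |B|
  closed walks of length 4, whereas by Cauchy-Schwarz a graph with S ordered edges on v vertices
  has at least S^4 / v^4 of them. The resulting inequality |B|^4 \<le> 2 v^7 + 256 v^5 |B|
  forces |B| = o(v^2).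
\<close>

definition shadow_adj :: "'a set set \<Rightarrow> 'a \<Rightarrow> 'a \<Rightarrow> bool" where
  "shadow_adj \<B> x y \<longleftrightarrow> x \<noteq> y \<and> (\<exists>b\<in>\<B>. x \<in> b \<and> y \<in> b)"

lemma shadow_adj_sym: "shadow_adj \<B> x y \<longleftrightarrow> shadow_adj \<B> y x"
  unfolding shadow_adj_def by blast

lemma shadow_adjE:
  assumes "shadow_adj \<B> x y"
  obtains b where "b \<in> \<B>" "{x, y} \<subseteq> b"
  using assms unfolding shadow_adj_def by auto

lemma IPPS_blockD:
  assumes "is_IPPS t w X \<B>" "b \<in> \<B>"
  shows "b \<subseteq> X" "card b = w"
  using assms unfolding is_IPPS_def by auto

lemma IPPS_finite:
  assumes "is_IPPS t w X \<B>" "finite X"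
  shows "finite \<B>"
  using assms by (intro finite_subset[of \<B> "Pow X"]) (auto dest: IPPS_blockD)

lemma IPPS_covering_families_meet:
  assumes "is_IPPS t w X \<B>" "T \<subseteq> X" "card T = w"
    and "\<P> \<in> covering_families t \<B> T" "\<Q> \<in> covering_families t \<B> T"
  shows "\<P> \<inter> \<Q> \<noteq> {}"
proof -
  have "\<Inter>(covering_families t \<B> T) \<noteq> {}"
    using assms unfolding is_IPPS_def by blast
  then show ?thesis using assms(4,5) by blast
qed

lemma pair_in_covering_families:
  assumes "b1 \<in> \<B>" "b2 \<in> \<B>" "T \<subseteq> b1 \<union> b2" "2 \<le> t"
  shows "{b1, b2} \<in> covering_families t \<B> T"
  using assms unfolding covering_families_def by (auto simp: card_insert_if)

lemma IPPS_private_pair: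
  assumes ipps: "is_IPPS t 4 X \<B>" and "2 \<le> t" and b: "b \<in> \<B>"
  shows "\<exists>x y. x \<noteq> y \<and> x \<in> b \<and> y \<in> b \<and> (\<forall>b'\<in>\<B>. x \<in> b' \<and> y \<in> b' \<longrightarrow> b' = b)"
proof -
  have "card b = 4" "b \<subseteq> X" using IPPS_blockD[OF ipps b] by auto
  then obtain P where "P \<subseteq> b" "card P = 2" "finite P"
    using obtain_subset_with_card_n[of 2 b] by auto
  moreover from this have "card (b - P) = 2"
    using \<open>card b = 4\<close> by (simp add: card_Diff_subset)
  ultimately obtain x y z w where P: "P = {x, y}" "x \<noteq> y" and rest: "b - P = {z, w}" "z \<noteq> w"
    by (meson card_2_iff)
  have "(\<forall>b'\<in>\<B>. x \<in> b' \<and> y \<in> b' \<longrightarrow> b' = b) \<or> (\<forall>b'\<in>\<B>. z \<in> b' \<and> w \<in> b' \<longrightarrow> b' = b)"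
  proof (rule ccontr)
    assume "\<not> ?thesis"
    then obtain b1 b2 where b1: "b1 \<in> \<B>" "{x, y} \<subseteq> b1" "b1 \<noteq> b"
      and b2: "b2 \<in> \<B>" "{z, w} \<subseteq> b2" "b2 \<noteq> b" by blast
    have "b \<subseteq> b1 \<union> b2" using P rest b1 b2 by blast
    then have "{b1, b2} \<in> covering_families t \<B> b"
      using b1 b2 \<open>2 \<le> t\<close> by (intro pair_in_covering_families) auto
    moreover have "{b, b} \<in> covering_families t \<B> b"
      using b \<open>2 \<le> t\<close> by (intro pair_in_covering_families) auto
    ultimately have "{b, b} \<inter> {b1, b2} \<noteq> {}"
      by (intro IPPS_covering_families_meet[OF ipps \<open>b \<subseteq> X\<close> \<open>card b = 4\<close>])
    with b1 b2 show False by blast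
  qed
  then show ?thesis
  proof
    assume "\<forall>b'\<in>\<B>. x \<in> b' \<and> y \<in> b' \<longrightarrow> b' = b"
    then show ?thesis using P \<open>P \<subseteq> b\<close> by blast
  next
    assume "\<forall>b'\<in>\<B>. z \<in> b' \<and> w \<in> b' \<longrightarrow> b' = b"
    then show ?thesis using rest by blast
  qed
qed

lemma IPPS_shadow_four_cycle:
  assumes ipps: "is_IPPS t 4 X \<B>" and "2 \<le> t" and "x \<noteq> z" "y \<noteq> w"
    and "shadow_adj \<B> x y" "shadow_adj \<B> y z" "shadow_adj \<B> z w" "shadow_adj \<B> w x"
  shows "\<exists>b\<in>\<B>. {w, x, y} \<subseteq> b \<or> {x, y, z} \<subseteq> b \<or> {y, z, w} \<subseteq> b \<or> {z, w, x} \<subseteq> b"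
proof -
  obtain b1 where b1: "b1 \<in> \<B>" "{x, y} \<subseteq> b1" using assms(5) by (rule shadow_adjE)
  obtain b2 where b2: "b2 \<in> \<B>" "{y, z} \<subseteq> b2" using assms(6) by (rule shadow_adjE)
  obtain b3 where b3: "b3 \<in> \<B>" "{z, w} \<subseteq> b3" using assms(7) by (rule shadow_adjE)
  obtain b4 where b4: "b4 \<in> \<B>" "{w, x} \<subseteq> b4" using assms(8) by (rule shadow_adjE)
  let ?T = "{x, y, z, w}"
  have "?T \<subseteq> X" using IPPS_blockD(1)[OF ipps] b1 b3 by blast
  moreover have "card ?T = 4" using assms(3-8) unfolding shadow_adj_def by auto
  ultimately have "{b1, b3} \<inter> {b2, b4} \<noteq> {}"
    using b1 b2 b3 b4 \<open>2 \<le> t\<close>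
    by (intro IPPS_covering_families_meet[OF ipps] pair_in_covering_families) auto
  then obtain b where "b \<in> {b1, b3}" "b \<in> {b2, b4}" by blast
  then show ?thesis using b1 b2 b3 b4 by auto
qed

lemma card_IPPS_le_shadow_edges:
  assumes ipps: "is_IPPS t 4 X \<B>" and "2 \<le> t" and "finite X"
  shows "real (card \<B>) \<le> (\<Sum>x\<in>X. \<Sum>y\<in>X. of_bool (shadow_adj \<B> x y))"
proof -
  let ?E = "{(x, y) \<in> X \<times> X. shadow_adj \<B> x y}"
  let ?private = "\<lambda>b (x, y). x \<in> b \<and> y \<in> b \<and> (\<forall>b'\<in>\<B>. x \<in> b' \<and> y \<in> b' \<longrightarrow> b' = b)"
  have "card \<B> \<le> card ?E"
  proof (rule card_le_if_inj_on_rel[where r = ?private])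
    show "finite ?E" using \<open>finite X\<close> by (auto intro: finite_subset)
  next
    fix b assume "b \<in> \<B>"
    then obtain x y where "x \<noteq> y" "x \<in> b" "y \<in> b" "\<forall>b'\<in>\<B>. x \<in> b' \<and> y \<in> b' \<longrightarrow> b' = b"
      using IPPS_private_pair[OF ipps \<open>2 \<le> t\<close>] by blast
    moreover have "b \<subseteq> X" using IPPS_blockD[OF ipps \<open>b \<in> \<B>\<close>] by simp
    ultimately show "\<exists>e. e \<in> ?E \<and> ?private b e"
      using \<open>b \<in> \<B>\<close> unfolding shadow_adj_def by blast
  qed auto
  also have "real (card ?E) = (\<Sum>(x, y)\<in>X \<times> X. of_bool (shadow_adj \<B> x y))"
    using \<open>finite X\<close> by (simp add: case_prod_unfold Int_def mem_Times_iff)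
  also have "\<dots> = (\<Sum>x\<in>X. \<Sum>y\<in>X. of_bool (shadow_adj \<B> x y))"
    by (rule sum.cartesian_product[symmetric])
  finally show ?thesis by simp
qed

lemma sym_sum_pow4_le_closed_walks:
  fixes a :: "'a \<Rightarrow> 'a \<Rightarrow> real"
  assumes "finite X" and sym: "\<And>x y. a x y = a y x"
  shows "(\<Sum>x\<in>X. \<Sum>y\<in>X. a x y)^4 \<le> real (card X)^4 * (\<Sum>x\<in>X. \<Sum>z\<in>X. (\<Sum>y\<in>X. a x y * a y z)^2)"
proof -
  let ?v = "real (card X)"
  define S where "S = (\<Sum>x\<in>X. \<Sum>y\<in>X. a x y)"
  define c where "c x z = (\<Sum>y\<in>X. a x y * a y z)" for x z
  define C where "C = (\<Sum>x\<in>X. \<Sum>z\<in>X. c x z)"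
  have "S^2 = (\<Sum>y\<in>X. \<Sum>x\<in>X. a x y)^2" unfolding S_def by (subst sum.swap) (rule refl)
  also have "\<dots> \<le> (\<Sum>y\<in>X. (\<Sum>x\<in>X. a x y)^2) * ?v" by (rule sum_squared_le_sum_of_squares)
  also have "(\<Sum>y\<in>X. (\<Sum>x\<in>X. a x y)^2) = (\<Sum>y\<in>X. \<Sum>x\<in>X. \<Sum>z\<in>X. a x y * a y z)"
    unfolding power2_eq_square sum_product by (intro sum.cong refl) (simp add: sym)
  also have "\<dots> = (\<Sum>x\<in>X. \<Sum>y\<in>X. \<Sum>z\<in>X. a x y * a y z)" by (rule sum.swap)
  also have "\<dots> = C" unfolding C_def c_def by (rule sum.cong[OF refl], rule sum.swap)
  finally have S2: "S^2 \<le> ?v * C" by (simp add: mult.commute)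
  have "C = (\<Sum>p\<in>X \<times> X. c (fst p) (snd p))"
    unfolding C_def by (simp add: sum.cartesian_product case_prod_unfold)
  then have "C^2 \<le> (\<Sum>p\<in>X \<times> X. (c (fst p) (snd p))^2) * real (card (X \<times> X))"
    by (simp only: sum_squared_le_sum_of_squares)
  also have "\<dots> = ?v^2 * (\<Sum>x\<in>X. \<Sum>z\<in>X. (c x z)^2)"
    by (simp add: sum.cartesian_product case_prod_unfold card_cartesian_product power2_eq_square)
  finally have C2: "C^2 \<le> ?v^2 * (\<Sum>x\<in>X. \<Sum>z\<in>X. (c x z)^2)" .
  have "S^4 = (S^2)^2" by simp
  also have "\<dots> \<le> (?v * C)^2" using S2 by (intro power_mono) auto
  also have "\<dots> = ?v^2 * C^2" by (simp add: power_mult_distrib)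
  also have "\<dots> \<le> ?v^2 * (?v^2 * (\<Sum>x\<in>X. \<Sum>z\<in>X. (c x z)^2))" using C2 by (intro mult_left_mono) auto
  finally show ?thesis unfolding S_def c_def by (simp add: mult.assoc flip: power_add)
qed

definition cycle_triples :: "'a set \<Rightarrow> 'a \<Rightarrow> 'a \<Rightarrow> 'a \<Rightarrow> 'a \<Rightarrow> real" where
  "cycle_triples b x y z w =
     of_bool ({w, x, y} \<subseteq> b) + of_bool ({x, y, z} \<subseteq> b) + of_bool ({y, z, w} \<subseteq> b) + of_bool ({z, w, x} \<subseteq> b)"

lemma cycle_triples_nonneg: "0 \<le> cycle_triples b x y z w"
  unfolding cycle_triples_def by simp

lemma sum_cycle_triples:
  assumes "finite X" "b \<subseteq> X"
  shows "(\<Sum>x\<in>X. \<Sum>z\<in>X. \<Sum>y\<in>X. \<Sum>w\<in>X. cycle_triples b x y z w) = 4 * real (card X) * real (card b)^3"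
proof -
  have "(\<Sum>x\<in>X. of_bool (x \<in> b) :: real) = real (card b)"
    using assms by (simp add: Int_absorb1 Int_def[symmetric])
  then show ?thesis
    unfolding cycle_triples_def of_bool_conj insert_subset empty_subsetI simp_thms
    by (simp add: sum.distrib power3_eq_cube flip: sum_distrib_left sum_distrib_right)
qed

lemma IPPS_closed_walk_indicator_le:
  assumes ipps: "is_IPPS t 4 X \<B>" and "2 \<le> t" and "finite \<B>"
  shows "of_bool (shadow_adj \<B> x y \<and> shadow_adj \<B> y z \<and> shadow_adj \<B> z w \<and> shadow_adj \<B> w x)
    \<le> of_bool (x = z) + of_bool (y = w) + (\<Sum>b\<in>\<B>. cycle_triples b x y z w)"
proof (cases "shadow_adj \<B> x y \<and> shadow_adj \<B> y z \<and> shadow_adj \<B> z w \<and> shadow_adj \<B> w x \<and> x \<noteq> z \<and> y \<noteq> w")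
  case True
  then obtain b where "b \<in> \<B>" and "{w, x, y} \<subseteq> b \<or> {x, y, z} \<subseteq> b \<or> {y, z, w} \<subseteq> b \<or> {z, w, x} \<subseteq> b"
    using IPPS_shadow_four_cycle[OF ipps \<open>2 \<le> t\<close>] by blast
  then have "1 \<le> cycle_triples b x y z w"
    unfolding cycle_triples_def by auto
  also have "\<dots> \<le> (\<Sum>b\<in>\<B>. cycle_triples b x y z w)"
    using \<open>b \<in> \<B>\<close> \<open>finite \<B>\<close> by (intro member_le_sum cycle_triples_nonneg)
  finally show ?thesis using True by simp
next
  case False
  moreover have "0 \<le> (\<Sum>b\<in>\<B>. cycle_triples b x y z w)"
    by (intro sum_nonneg cycle_triples_nonneg)
  ultimately show ?thesis by auto
qed

lemma IPPS_closed_walks_le: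
  assumes ipps: "is_IPPS t 4 X \<B>" and "2 \<le> t" and "finite X"
  shows "(\<Sum>x\<in>X. \<Sum>z\<in>X. (\<Sum>y\<in>X. of_bool (shadow_adj \<B> x y) * of_bool (shadow_adj \<B> y z))^2)
    \<le> 2 * real (card X)^3 + 256 * real (card X) * real (card \<B>)"
proof -
  let ?v = "real (card X)"
  have diagonal: "(\<Sum>z\<in>X. of_bool (x = z) :: real) = 1" if "x \<in> X" for x
    using that \<open>finite X\<close> by (simp add: of_bool_def)
  have closed_walk: "of_bool (shadow_adj \<B> x y) * of_bool (shadow_adj \<B> y z) *
      (of_bool (shadow_adj \<B> x w) * of_bool (shadow_adj \<B> w z)) =
      (of_bool (shadow_adj \<B> x y \<and> shadow_adj \<B> y z \<and> shadow_adj \<B> z w \<and> shadow_adj \<B> w x) :: real)"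
    for x y z w
    by (simp only: of_bool_conj shadow_adj_sym[of \<B> w x] shadow_adj_sym[of \<B> z w] ac_simps)
  have "(\<Sum>x\<in>X. \<Sum>z\<in>X. (\<Sum>y\<in>X. of_bool (shadow_adj \<B> x y) * of_bool (shadow_adj \<B> y z))^2)
      = (\<Sum>x\<in>X. \<Sum>z\<in>X. \<Sum>y\<in>X. \<Sum>w\<in>X.
           of_bool (shadow_adj \<B> x y \<and> shadow_adj \<B> y z \<and> shadow_adj \<B> z w \<and> shadow_adj \<B> w x) :: real)"
    unfolding power2_eq_square sum_product closed_walk ..
  also have "\<dots> \<le> (\<Sum>x\<in>X. \<Sum>z\<in>X. \<Sum>y\<in>X. \<Sum>w\<in>X.
           of_bool (x = z) + of_bool (y = w) + (\<Sum>b\<in>\<B>. cycle_triples b x y z w))"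
    by (intro sum_mono IPPS_closed_walk_indicator_le[OF ipps \<open>2 \<le> t\<close> IPPS_finite[OF ipps \<open>finite X\<close>]])
  also have "\<dots> = 2 * ?v^3 + (\<Sum>b\<in>\<B>. \<Sum>x\<in>X. \<Sum>z\<in>X. \<Sum>y\<in>X. \<Sum>w\<in>X. cycle_triples b x y z w)"
    by (simp add: sum.distrib diagonal power3_eq_cube flip: sum_distrib_left sum_distrib_right)
       (simp only: sum.swap[where B = \<B>])
  also have "\<dots> = 2 * ?v^3 + 256 * ?v * real (card \<B>)"
    using IPPS_blockD[OF ipps] \<open>finite X\<close> by (simp add: sum_cycle_triples)
  finally show ?thesis .
qed

lemma card_IPPS_pow4_le:
  assumes ipps: "is_IPPS t 4 X \<B>" and "2 \<le> t" and "finite X"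
  shows "real (card \<B>)^4 \<le> 2 * real (card X)^7 + 256 * real (card X)^5 * real (card \<B>)"
proof -
  let ?v = "real (card X)"
  let ?a = "\<lambda>x y. of_bool (shadow_adj \<B> x y) :: real"
  have "real (card \<B>)^4 \<le> (\<Sum>x\<in>X. \<Sum>y\<in>X. ?a x y)^4"
    using card_IPPS_le_shadow_edges[OF assms] by (intro power_mono) auto
  also have "\<dots> \<le> ?v^4 * (\<Sum>x\<in>X. \<Sum>z\<in>X. (\<Sum>y\<in>X. ?a x y * ?a y z)^2)"
    using \<open>finite X\<close> by (intro sym_sum_pow4_le_closed_walks) (simp_all add: shadow_adj_sym)
  also have "\<dots> \<le> ?v^4 * (2 * ?v^3 + 256 * ?v * real (card \<B>))"
    by (intro mult_left_mono IPPS_closed_walks_le[OF assms]) auto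
  also have "\<dots> = 2 * ?v^7 + 256 * ?v^5 * real (card \<B>)"
    by (simp add: algebra_simps flip: power_add power_Suc)
  finally show ?thesis .
qed

lemma little_o_sq_of_pow4_le:
  fixes N :: "nat \<Rightarrow> real"
  assumes "0 \<le> a" and bound: "\<And>v. N v ^ 4 \<le> a * real v ^ 7 + b * real v ^ 5 * N v"
  shows "\<forall>\<epsilon>::real. \<epsilon> > 0 \<longrightarrow> (\<exists>v0::nat. \<forall>v::nat. v > v0 \<longrightarrow> N v < \<epsilon> * (real v)^2)"
proof (intro allI impI)
  fix \<epsilon> :: real assume "0 < \<epsilon>"
  let ?K = "a / \<epsilon> + b"
  have "N v < \<epsilon> * (real v)^2" if "nat \<lceil>?K / \<epsilon>^3\<rceil> < v" for v
  proof (rule ccontr)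
    assume "\<not> ?thesis"
    then have lower: "\<epsilon> * real v ^ 2 \<le> N v" by simp
    have "?K / \<epsilon>^3 < real v"
      using real_nat_ceiling_ge[of "?K / \<epsilon>^3"] that by linarith
    then have "?K < \<epsilon>^3 * real v"
      using \<open>0 < \<epsilon>\<close> by (simp add: pos_divide_less_eq mult.commute)
    have "0 < real v" using that by simp
    then have "0 < N v"
      using lower \<open>0 < \<epsilon>\<close> by (metis mult_pos_pos zero_less_power order_less_le_trans)
    have "a * real v ^ 7 = a / \<epsilon> * real v ^ 5 * (\<epsilon> * real v ^ 2)"
      using \<open>0 < \<epsilon>\<close> by (simp flip: power_add)
    also have "\<dots> \<le> a / \<epsilon> * real v ^ 5 * N v"
      using lower \<open>0 \<le> a\<close> \<open>0 < \<epsilon>\<close> by (intro mult_left_mono) auto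
    finally have "N v ^ 4 \<le> a / \<epsilon> * real v ^ 5 * N v + b * real v ^ 5 * N v"
      using bound[of v] by linarith
    then have "N v ^ 3 * N v \<le> (?K * real v ^ 5) * N v"
      by (simp add: algebra_simps numeral_eq_Suc)
    then have "N v ^ 3 \<le> ?K * real v ^ 5" using \<open>0 < N v\<close> by simp
    moreover have "(\<epsilon> * real v ^ 2) ^ 3 \<le> N v ^ 3"
      using lower \<open>0 < \<epsilon>\<close> by (intro power_mono) auto
    moreover have "(\<epsilon> * real v ^ 2) ^ 3 = (\<epsilon>^3 * real v) * real v ^ 5"
      by (simp add: power_mult_distrib numeral_eq_Suc)
    ultimately have "(\<epsilon>^3 * real v) * real v ^ 5 \<le> ?K * real v ^ 5" by linarith
    then show False using \<open>?K < \<epsilon>^3 * real v\<close> \<open>0 < real v\<close> by simp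
  qed
  then show "\<exists>v0::nat. \<forall>v::nat. v > v0 \<longrightarrow> N v < \<epsilon> * (real v)^2" by blast
qed

lemma I_IPPS_attained:
  assumes "0 < w"
  obtains \<B> where "is_IPPS t w {..<v} \<B>" "card \<B> = I_IPPS t w v"
proof -
  let ?sizes = "{card \<B> | \<B> :: nat set set. is_IPPS t w {..<v} \<B>}"
  have "?sizes \<subseteq> {..card (Pow {..<v::nat})}"
  proof
    fix n assume "n \<in> ?sizes"
    then obtain \<B> :: "nat set set" where "is_IPPS t w {..<v} \<B>" "n = card \<B>" by blast
    then show "n \<in> {..card (Pow {..<v})}"
      by (auto intro!: card_mono dest: IPPS_blockD)
  qed
  then have "finite ?sizes" by (rule finite_subset) simp
  have "is_IPPS t w {..<v} {}"
    using \<open>0 < w\<close> unfolding is_IPPS_def covering_families_def by auto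
  then have "?sizes \<noteq> {}" by blast
  with \<open>finite ?sizes\<close> have "I_IPPS t w v \<in> ?sizes" unfolding I_IPPS_def by (rule Max_in)
  then obtain \<B> where "is_IPPS t w {..<v} \<B>" "I_IPPS t w v = card \<B>" by blast
  then show thesis by (intro that) simp_all
qed

theorem theorem4:
  shows "\<forall>\<epsilon>::real. \<epsilon> > 0 \<longrightarrow>
           (\<exists>v0::nat. \<forall>v::nat. v > v0 \<longrightarrow> real (I_IPPS 2 4 v) < \<epsilon> * (real v)^2)"
proof (rule little_o_sq_of_pow4_le)
  fix v :: nat
  obtain \<B> where "is_IPPS 2 4 {..<v} \<B>" "card \<B> = I_IPPS 2 4 v"
    using I_IPPS_attained by (metis zero_less_numeral)
  then show "real (I_IPPS 2 4 v) ^ 4 \<le> 2 * real v ^ 7 + 256 * real v ^ 5 * real (I_IPPS 2 4 v)"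
    using card_IPPS_pow4_le[of 2 "{..<v}" \<B>] by simp
qed simp

end
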